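(* Let $Q$ be a connected quiver of rank $3$ with at least one frozen vertex whose mutable part $Q^{\mathrm{mut}}$ is mutation-abundant, and let $\mathbf M$ be an infinite mutation sequence which is reduced, weakly balanced, and cycle-preserving on $Q^{\mathrm{mut}}$. Then $Q$ is eventually sign-coherent on $\mathbf M$: there is $T$ such that $Q^{(j)}_{\mathbf M}$ is sign-coherent for all $j>T$.
   Context: A quiver is a finite directed multigraph with no loops and no oriented 2-cycles, whose vertex set is partitioned into mutable and frozen vertices; arrows between two frozen vertices are ignored. $Q^{\mathrm{mut}}$ is the subquiver on the mutable vertices and $Q|_S$ the induced subquiver on $S$. Mutation $\mu_j$ at mutable $j$: for each path $i\to j\to k$ with $a$ arrows $i\to j$ and $b$ arrows $j\to k$ add $ab$ arrows $i\to k$, reverse all arrows at $j$, cancel 2-cycles. A mutation sequence $\mathbf M=m_1m_2\cdots$ has $Q^{(0)}_{\mathbf M}=Q$, $Q^{(i)}_{\mathbf M}=\mu_{m_i}(Q^{(i-1)}_{\mathbf M})$; it is reduced if $m_i\ne m_{i+1}$, weakly balanced if every mutable vertex occurs infinitely often. Connected: the mutable part is connected as an undirected graph and every frozen vertex is adjacent to some mutable vertex. A quiver without frozen vertices is mutation-abundant if every quiver mutation-equivalent to it has at least 2 arrows between every pair of vertices. A 3-vertex (sub)quiver is an oriented 3-cycle if it has at most one frozen vertex and its underlying directed graph is not acyclic. A mutable vertex $j$ is cycle-preserving for $Q$ if whenever $Q|_{\{i,j,k\}}$ is an oriented 3-cycle containing $j$, so is $\mu_j(Q)|_{\{i,j,k\}}$;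 $\mathbf M$ is cycle-preserving on $Q^{\mathrm{mut}}$ if each $m_\ell$ is cycle-preserving for $(Q^{(\ell-1)}_{\mathbf M})^{\mathrm{mut}}$. A mutable vertex adjacent to at least one frozen vertex is red (resp. green) if all arrows between it and frozen vertices point towards (resp. away from) it; a quiver is sign-coherent if every mutable vertex is red or green. *)

theory Defs
  imports Main
begin

text \<open>A quiver is encoded by a finite vertex set V, a set Mu of mutable vertices
(the frozen vertices are V - Mu), and an integer function B with
B i j = (number of arrows i to j) - (number of arrows j to i).  Since quivers have no
loops and no oriented 2-cycles, B determines the quiver: there are nat (B i j) arrows
from i to j.  Entries between two frozen vertices are irrelevant (ignored).\<close>

definition is_quiver :: "'v set \<Rightarrow> 'v set \<Rightarrow> ('v \<Rightarrow> 'v \<Rightarrow> int) \<Rightarrow> bool" where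
  "is_quiver V Mu B \<longleftrightarrow> finite V \<and> Mu \<subseteq> V \<and> (\<forall>i j. B i j = - B j i)
     \<and> (\<forall>i j. i \<notin> V \<or> j \<notin> V \<longrightarrow> B i j = 0)"

definition arrows :: "('v \<Rightarrow> 'v \<Rightarrow> int) \<Rightarrow> 'v \<Rightarrow> 'v \<Rightarrow> nat" where
  "arrows B i j = nat (B i j)"

definition mutate :: "'v \<Rightarrow> ('v \<Rightarrow> 'v \<Rightarrow> int) \<Rightarrow> ('v \<Rightarrow> 'v \<Rightarrow> int)" where
  "mutate k B = (\<lambda>i j. if i = k \<or> j = k then - B i j
       else B i j + int (arrows B i k * arrows B k j) - int (arrows B j k * arrows B k i))"

definition mutate_list :: "'v list \<Rightarrow> ('v \<Rightarrow> 'v \<Rightarrow> int) \<Rightarrow> ('v \<Rightarrow> 'v \<Rightarrow> int)" where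
  "mutate_list ks B = fold mutate ks B"

text \<open>Q^(n) for an infinite mutation sequence m = m_1 m_2 ...; here m n is m_{n+1}.\<close>
primrec Qseq :: "('v \<Rightarrow> 'v \<Rightarrow> int) \<Rightarrow> (nat \<Rightarrow> 'v) \<Rightarrow> nat \<Rightarrow> ('v \<Rightarrow> 'v \<Rightarrow> int)" where
  "Qseq B m 0 = B"
| "Qseq B m (Suc n) = mutate (m n) (Qseq B m n)"

text \<open>Induced subquiver on S (used for the mutable part Q^mut, on vertex set Mu,
with no frozen vertices).\<close>
definition restrict_q :: "'v set \<Rightarrow> ('v \<Rightarrow> 'v \<Rightarrow> int) \<Rightarrow> ('v \<Rightarrow> 'v \<Rightarrow> int)" where
  "restrict_q S B = (\<lambda>i j. if i \<in> S \<and> j \<in> S then B i j else 0)"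

definition adjacent :: "('v \<Rightarrow> 'v \<Rightarrow> int) \<Rightarrow> 'v \<Rightarrow> 'v \<Rightarrow> bool" where
  "adjacent B i j \<longleftrightarrow> B i j \<noteq> 0"

definition connected_quiver :: "'v set \<Rightarrow> 'v set \<Rightarrow> ('v \<Rightarrow> 'v \<Rightarrow> int) \<Rightarrow> bool" where
  "connected_quiver V Mu B \<longleftrightarrow>
     (\<forall>i\<in>Mu. \<forall>j\<in>Mu. (i, j) \<in> {(x, y). x \<in> Mu \<and> y \<in> Mu \<and> adjacent B x y}\<^sup>*)
     \<and> (\<forall>f\<in>V - Mu. \<exists>i\<in>Mu. adjacent B f i)"

definition mutation_abundant :: "'v set \<Rightarrow> ('v \<Rightarrow> 'v \<Rightarrow> int) \<Rightarrow> bool" where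
  "mutation_abundant S B \<longleftrightarrow>
     (\<forall>ks. set ks \<subseteq> S \<longrightarrow> (\<forall>i\<in>S. \<forall>j\<in>S. i \<noteq> j \<longrightarrow> \<bar>mutate_list ks B i j\<bar> \<ge> 2))"

definition oriented_3cycle :: "'v set \<Rightarrow> ('v \<Rightarrow> 'v \<Rightarrow> int) \<Rightarrow> 'v set \<Rightarrow> bool" where
  "oriented_3cycle Fr B S \<longleftrightarrow> card S = 3 \<and> card (S \<inter> Fr) \<le> 1
     \<and> \<not> acyclic {(x, y). x \<in> S \<and> y \<in> S \<and> B x y > 0}"

definition cycle_preserving :: "'v set \<Rightarrow> 'v set \<Rightarrow> ('v \<Rightarrow> 'v \<Rightarrow> int) \<Rightarrow> 'v \<Rightarrow> bool" where
  "cycle_preserving S Fr B j \<longleftrightarrow>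
     (\<forall>i k. {i, j, k} \<subseteq> S \<longrightarrow> oriented_3cycle Fr B {i, j, k}
        \<longrightarrow> oriented_3cycle Fr (mutate j B) {i, j, k})"

definition reduced_seq :: "(nat \<Rightarrow> 'v) \<Rightarrow> bool" where
  "reduced_seq m \<longleftrightarrow> (\<forall>n. m n \<noteq> m (Suc n))"

definition weakly_balanced :: "'v set \<Rightarrow> (nat \<Rightarrow> 'v) \<Rightarrow> bool" where
  "weakly_balanced Mu m \<longleftrightarrow> (\<forall>k\<in>Mu. infinite {n. m n = k})"

definition cycle_preserving_seq :: "'v set \<Rightarrow> ('v \<Rightarrow> 'v \<Rightarrow> int) \<Rightarrow> (nat \<Rightarrow> 'v) \<Rightarrow> bool" where
  "cycle_preserving_seq Mu B m \<longleftrightarrow>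
     (\<forall>n. cycle_preserving Mu {} (restrict_q Mu (Qseq B m n)) (m n))"

definition red :: "'v set \<Rightarrow> 'v set \<Rightarrow> ('v \<Rightarrow> 'v \<Rightarrow> int) \<Rightarrow> 'v \<Rightarrow> bool" where
  "red V Mu B v \<longleftrightarrow> (\<exists>f\<in>V - Mu. adjacent B v f) \<and> (\<forall>f\<in>V - Mu. B f v \<ge> 0)"

definition green :: "'v set \<Rightarrow> 'v set \<Rightarrow> ('v \<Rightarrow> 'v \<Rightarrow> int) \<Rightarrow> 'v \<Rightarrow> bool" where
  "green V Mu B v \<longleftrightarrow> (\<exists>f\<in>V - Mu. adjacent B v f) \<and> (\<forall>f\<in>V - Mu. B v f \<ge> 0)"

definition sign_coherent :: "'v set \<Rightarrow> 'v set \<Rightarrow> ('v \<Rightarrow> 'v \<Rightarrow> int) \<Rightarrow> bool" where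
  "sign_coherent V Mu B \<longleftrightarrow> (\<forall>v\<in>Mu. red V Mu B v \<or> green V Mu B v)"

end

(* Either the mutable part never contains an oriented 3-cycle, or it contains one from some
   time on, since cycle preservation propagates it.

   In the acyclic case every mutated vertex is a source (or, replacing B by -B, every one is a
   sink).  Then the run is 3-periodic and the entry e n = B f (m n) of a frozen row satisfies the
   tropical recurrence e (n + 3) = - e n + a max (e (n + 1)) 0 + c max (e (n + 2)) 0 with weights
   a, c >= 2, whose solutions are eventually positive and increasing; this fixes the signs of the
   whole row.

   In the cyclic case the row of f, read in coordinates attached to the current 3-cycle, moves
   under one of two piecewise-linear maps, according to whether the out- or the in-neighbour of
   the last mutated vertex is mutated next.  One region is invariant under both maps, two others
   are invariant under one map and sent into the first by the other, and off these regions the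
   l1-norm decreases.  Weak balance forces both maps to occur infinitely often, so every frozen
   row is eventually absorbed, and its signs are then determined by the cycle alone.

   In both cases all frozen rows eventually share one sign pattern, which is sign-coherence. *)

theory Submission
  imports Defs
begin

section \<open>Mutation of skew-symmetric exchange matrices\<close>

definition skew_symmetric :: "('v \<Rightarrow> 'v \<Rightarrow> int) \<Rightarrow> bool" where
  "skew_symmetric B \<longleftrightarrow> (\<forall>i j. B i j = - B j i)"

lemma skew_symmetricD: "skew_symmetric B \<Longrightarrow> B i j = - B j i"
  unfolding skew_symmetric_def by blast

lemma skew_symmetric_diag:
  assumes "skew_symmetric B" shows "B i i = 0"
proof -
  have "B i i = - B i i" by (rule skew_symmetricD[OF assms])
  then show ?thesis by linarith
qed

lemma skew_symmetric_uminus: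
  assumes "skew_symmetric B" shows "skew_symmetric (\<lambda>i j. - B i j)"
  unfolding skew_symmetric_def
proof (intro allI)
  fix i j
  show "- B i j = - (- B j i)" using skew_symmetricD[OF assms, of i j] by simp
qed

lemma int_arrows: "int (arrows B i j) = max (B i j) 0"
  unfolding arrows_def by (simp add: max_def)

lemma mutate_row: "mutate k B k j = - B k j"
  and mutate_col: "mutate k B i k = - B i k"
  unfolding mutate_def by simp_all

lemma mutate_off:
  "i \<noteq> k \<Longrightarrow> j \<noteq> k \<Longrightarrow>
    mutate k B i j = B i j + max (B i k) 0 * max (B k j) 0 - max (B j k) 0 * max (B k i) 0"
  unfolding mutate_def by (simp add: int_arrows)

lemma skew_symmetric_mutate:
  assumes "skew_symmetric B" shows "skew_symmetric (mutate k B)"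
  unfolding skew_symmetric_def
proof (intro allI)
  fix i j
  show "mutate k B i j = - mutate k B j i"
  proof (cases "i = k \<or> j = k")
    case True
    then have "mutate k B i j = - B i j" "mutate k B j i = - B j i"
      by (auto simp: mutate_row mutate_col)
    then show ?thesis using skew_symmetricD[OF assms, of i j] by linarith
  next
    case False
    have "B j i = - B i j" "B k i = - B i k" "B j k = - B k j"
      using skew_symmetricD[OF assms] by blast+
    with False show ?thesis by (simp add: mutate_off algebra_simps)
  qed
qed

lemma skew_symmetric_Qseq: "skew_symmetric B \<Longrightarrow> skew_symmetric (Qseq B m n)"
  by (induction n) (auto intro: skew_symmetric_mutate)

lemma mutate_uminus:
  assumes "skew_symmetric B"
  shows "mutate k (\<lambda>i j. - B i j) = (\<lambda>i j. - mutate k B i j)"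
proof (intro ext)
  fix i j
  show "mutate k (\<lambda>i j. - B i j) i j = - mutate k B i j"
  proof (cases "i = k \<or> j = k")
    case True
    then show ?thesis by (auto simp: mutate_row mutate_col)
  next
    case False
    have "B j k = - B k j" "B k i = - B i k" using skew_symmetricD[OF assms] by blast+
    with False show ?thesis by (simp add: mutate_off algebra_simps)
  qed
qed

lemma Qseq_uminus:
  "skew_symmetric B \<Longrightarrow> Qseq (\<lambda>i j. - B i j) m n = (\<lambda>i j. - Qseq B m n i j)"
  by (induction n) (simp_all add: mutate_uminus skew_symmetric_Qseq)

lemma Qseq_add: "Qseq B m (n + c) = Qseq (Qseq B m c) (\<lambda>n. m (n + c)) n"
  by (induction n) simp_all

lemma restrict_q_mutate: "k \<in> S \<Longrightarrow> restrict_q S (mutate k B) = mutate k (restrict_q S B)"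
  unfolding restrict_q_def mutate_def by (simp only: of_nat_mult int_arrows) (auto simp: fun_eq_iff)

lemma restrict_q_Qseq: "\<forall>n. m n \<in> S \<Longrightarrow> restrict_q S (Qseq B m n) = Qseq (restrict_q S B) m n"
  by (induction n) (simp_all add: restrict_q_mutate)

lemma mutation_abundant_Qseq:
  assumes "mutation_abundant S (restrict_q S B)" and "\<forall>n. m n \<in> S"
    and "i \<in> S" "j \<in> S" "i \<noteq> j"
  shows "\<bar>Qseq B m n i j\<bar> \<ge> 2"
proof -
  have "fold mutate (map m [0..<n]) B' = Qseq B' m n" for B'
    by (induction n) simp_all
  then have "mutate_list (map m [0..<n]) (restrict_q S B) = restrict_q S (Qseq B m n)"
    unfolding mutate_list_def using restrict_q_Qseq[OF assms(2)] by simp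
  moreover have "set (map m [0..<n]) \<subseteq> S" using assms(2) by auto
  ultimately have "\<bar>restrict_q S (Qseq B m n) i j\<bar> \<ge> 2"
    using assms(1,3-5) unfolding mutation_abundant_def by metis
  with assms(3,4) show ?thesis unfolding restrict_q_def by simp
qed

section \<open>Oriented 3-cycles\<close>

definition cycle3 :: "('v \<Rightarrow> 'v \<Rightarrow> int) \<Rightarrow> 'v \<Rightarrow> 'v \<Rightarrow> 'v \<Rightarrow> bool" where
  "cycle3 B a b c \<longleftrightarrow> B a b > 0 \<and> B b c > 0 \<and> B c a > 0"

definition has_cycle3 :: "'v set \<Rightarrow> ('v \<Rightarrow> 'v \<Rightarrow> int) \<Rightarrow> bool" where
  "has_cycle3 S B \<longleftrightarrow> (\<exists>a\<in>S. \<exists>b\<in>S. \<exists>c\<in>S. cycle3 B a b c)"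

lemma card3_eq:
  assumes "card S = 3" "a \<in> S" "b \<in> S" "c \<in> S" "a \<noteq> b" "a \<noteq> c" "b \<noteq> c"
  shows "S = {a, b, c}"
proof (rule card_subset_eq[symmetric])
  show "finite S" by (rule card_ge_0_finite) (simp add: assms(1))
  show "{a, b, c} \<subseteq> S" "card {a, b, c} = card S" using assms by auto
qed

lemma card3_third:
  assumes "card S = 3" "a \<in> S" "b \<in> S" "a \<noteq> b"
  obtains c where "S = {a, b, c}" "c \<noteq> a" "c \<noteq> b"
proof -
  have "\<not> S \<subseteq> {a, b}"
  proof
    assume "S \<subseteq> {a, b}"
    then have "card S \<le> card {a, b}" by (intro card_mono) auto
    with assms(1,4) show False by simp
  qed
  then obtain c where c: "c \<in> S" "c \<noteq> a" "c \<noteq> b" by blast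
  have "S = {a, b, c}" by (rule card3_eq) (use assms c in auto)
  with c that show ?thesis by blast
qed

lemma cycle3_rotate: "cycle3 B a b c \<longleftrightarrow> cycle3 B b c a"
  unfolding cycle3_def by auto

lemma cycle3_distinct:
  assumes "skew_symmetric B" "cycle3 B a b c"
  shows "a \<noteq> b \<and> b \<noteq> c \<and> c \<noteq> a"
proof -
  have "B a a = 0" "B b b = 0" "B c c = 0" by (rule skew_symmetric_diag[OF assms(1)])+
  with assms(2) show ?thesis unfolding cycle3_def by auto
qed

lemma cycle3_through:
  assumes skew: "skew_symmetric B" and S: "card S = 3" "has_cycle3 S B" and k: "k \<in> S"
  obtains i j where "S = {k, i, j}" "cycle3 B k i j"
proof -
  obtain a b c where abc: "a \<in> S" "b \<in> S" "c \<in> S" "cycle3 B a b c"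
    using S(2) unfolding has_cycle3_def by blast
  have "a \<noteq> b" "a \<noteq> c" "b \<noteq> c" using cycle3_distinct[OF skew abc(4)] by auto
  then have S_eq: "S = {a, b, c}" by (rule card3_eq[OF S(1) abc(1-3)])
  consider "k = a" | "k = b" | "k = c" using k S_eq by blast
  then show ?thesis
  proof cases
    case 1
    show ?thesis by (rule that[of b c]) (use 1 S_eq abc(4) in simp_all)
  next
    case 2
    show ?thesis by (rule that[of c a]) (use 2 S_eq abc(4) in \<open>auto simp: cycle3_def\<close>)
  next
    case 3
    show ?thesis by (rule that[of a b]) (use 3 S_eq abc(4) in \<open>auto simp: cycle3_def\<close>)
  qed
qed

lemma cycle3_unique:
  assumes skew: "skew_symmetric B" and "cycle3 B k i j" "cycle3 B k i' j'"
    and "i' \<in> {k, i, j}" "j' \<in> {k, i, j}"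
  shows "i' = i \<and> j' = j"
proof -
  have "B k i' > 0" "B j' k > 0" "B k k = 0" using assms(3) skew_symmetric_diag[OF skew]
    unfolding cycle3_def by auto
  moreover have "B k j < 0" "B i k < 0"
    using assms(2) skew_symmetricD[OF skew, of k j] skew_symmetricD[OF skew, of i k]
    unfolding cycle3_def by linarith+
  ultimately have "i' \<noteq> k" "i' \<noteq> j" "j' \<noteq> k" "j' \<noteq> i" by auto
  then show ?thesis using assms(4,5) by blast
qed

text \<open>Mutation at a vertex of an oriented 3-cycle reverses its two arrows there, so if the
  result is again cyclic, the whole cycle has been reversed.\<close>

lemma cycle3_mutate:
  assumes skew: "skew_symmetric B" and cyc: "cycle3 B a b c"
    and "has_cycle3 {a, b, c} (mutate a B)"
  shows "cycle3 (mutate a B) a c b"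
proof -
  let ?B' = "mutate a B"
  have skew': "skew_symmetric ?B'" using skew_symmetric_mutate[OF skew] .
  have "card {a, b, c} = 3" using cycle3_distinct[OF skew cyc] by auto
  then obtain i j where ij: "{a, b, c} = {a, i, j}" "cycle3 ?B' a i j"
    using cycle3_through[OF skew' _ assms(3)] by blast
  have "?B' a c > 0" "?B' b a > 0"
    using cyc skew_symmetricD[OF skew, of c a] skew_symmetricD[OF skew, of a b]
    unfolding cycle3_def by (auto simp: mutate_row mutate_col)
  then have "cycle3 ?B' a c b \<longleftrightarrow> ?B' c b > 0" unfolding cycle3_def by simp
  moreover have "i = c \<and> j = b"
  proof -
    have "?B' a b < 0" using \<open>?B' b a > 0\<close> skew_symmetricD[OF skew', of a b] by linarith
    moreover have "?B' a i > 0" "?B' a a = 0"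
      using ij(2) skew_symmetric_diag[OF skew'] unfolding cycle3_def by auto
    ultimately have "i \<noteq> b" "i \<noteq> a" by auto
    moreover have "j \<noteq> a" "j \<noteq> i" using cycle3_distinct[OF skew' ij(2)] by auto
    ultimately show ?thesis using ij(1) by (metis insertCI insertE singletonD)
  qed
  ultimately show ?thesis using ij(2) unfolding cycle3_def by blast
qed

lemma mutate_cycle3_out:
  assumes skew: "skew_symmetric B" and cyc: "cycle3 B k i j" and f: "f \<noteq> k" "f \<noteq> i" "f \<noteq> j"
  shows "mutate i B k f = B k i * max (B i f) 0 - B f k"
    and "mutate i B f j = B f j + B i j * max (- B i f) 0"
    and "mutate i B f i = B i f" and "mutate i B i k = B k i" and "mutate i B j i = B i j"
proof -
  have dist: "k \<noteq> i" "i \<noteq> j" "j \<noteq> k" using cycle3_distinct[OF skew cyc] by auto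
  have pos: "B k i > 0" "B i j > 0" using cyc unfolding cycle3_def by auto
  have anti: "B i k = - B k i" "B j i = - B i j" "B f i = - B i f" "B k f = - B f k"
    using skew_symmetricD[OF skew] by blast+
  show "mutate i B k f = B k i * max (B i f) 0 - B f k"
    using mutate_off[of k i f B] dist f pos anti by simp
  show "mutate i B f j = B f j + B i j * max (- B i f) 0"
    using mutate_off[of f i j B] dist f pos anti by (simp add: mult.commute)
  show "mutate i B f i = B i f" "mutate i B i k = B k i" "mutate i B j i = B i j"
    using anti by (simp_all add: mutate_row mutate_col)
qed

lemma mutate_cycle3_in:
  assumes skew: "skew_symmetric B" and cyc: "cycle3 B k i j" and f: "f \<noteq> k" "f \<noteq> i" "f \<noteq> j"
  shows "mutate j B i f = B i f + B i j * max (- B f j) 0"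
    and "mutate j B f k = B j k * max (B f j) 0 + B f k"
    and "mutate j B f j = - B f j" and "mutate j B j i = B i j" and "mutate j B k j = B j k"
proof -
  have dist: "k \<noteq> i" "i \<noteq> j" "j \<noteq> k" using cycle3_distinct[OF skew cyc] by auto
  have pos: "B i j > 0" "B j k > 0" using cyc unfolding cycle3_def by auto
  have anti: "B j i = - B i j" "B k j = - B j k" "B j f = - B f j"
    using skew_symmetricD[OF skew] by blast+
  show "mutate j B i f = B i f + B i j * max (- B f j) 0"
    using mutate_off[of i j f B] dist f pos anti by simp
  show "mutate j B f k = B j k * max (B f j) 0 + B f k"
    using mutate_off[of f j k B] dist f pos anti by (simp add: mult.commute)
  show "mutate j B f j = - B f j" "mutate j B j i = B i j" "mutate j B k j = B j k"
    using anti by (simp_all add: mutate_row mutate_col)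
qed

lemma acyclic_if_no_cycle3:
  assumes skew: "skew_symmetric B" and "finite S"
    and tournament: "\<And>i j. i \<in> S \<Longrightarrow> j \<in> S \<Longrightarrow> i \<noteq> j \<Longrightarrow> B i j \<noteq> 0"
    and "\<not> has_cycle3 S B"
  shows "acyclic {(x, y). x \<in> S \<and> y \<in> S \<and> B x y > 0}" (is "acyclic ?R")
proof -
  define indeg where "indeg x = card {z \<in> S. B z x > 0}" for x
  have indeg_less: "indeg x < indeg y" if "(x, y) \<in> ?R" for x y
  proof -
    have xy: "x \<in> S" "y \<in> S" "B x y > 0" using that by auto
    have "{z \<in> S. B z x > 0} \<subseteq> {z \<in> S. B z y > 0}"
    proof safe
      fix z assume z: "z \<in> S" "B z x > 0"
      have "z \<noteq> y" using z(2) xy(3) skew_symmetricD[OF skew, of x y] by auto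
      moreover have "\<not> B y z > 0"
        using assms(4) z xy unfolding has_cycle3_def cycle3_def by blast
      ultimately show "B z y > 0"
        using tournament[OF z(1) xy(2)] skew_symmetricD[OF skew, of y z] by linarith
    qed
    moreover have "x \<in> {z \<in> S. B z y > 0}" "x \<notin> {z \<in> S. B z x > 0}"
      using xy skew_symmetric_diag[OF skew, of x] by auto
    ultimately show ?thesis
      unfolding indeg_def using \<open>finite S\<close> by (intro psubset_card_mono) auto
  qed
  have "indeg a < indeg b" if "(a, b) \<in> ?R\<^sup>+" for a b
    using that by induction (use indeg_less in force)+
  then show ?thesis unfolding acyclic_def by blast
qed

lemma oriented_3cycle_restrict_q_iff:
  assumes skew: "skew_symmetric B" and card: "card S = 3"
    and tournament: "\<And>i j. i \<in> S \<Longrightarrow> j \<in> S \<Longrightarrow> i \<noteq> j \<Longrightarrow> B i j \<noteq> 0"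
  shows "oriented_3cycle {} (restrict_q S B) S \<longleftrightarrow> has_cycle3 S B"
proof -
  have rel: "{(x, y). x \<in> S \<and> y \<in> S \<and> restrict_q S B x y > 0}
      = {(x, y). x \<in> S \<and> y \<in> S \<and> B x y > 0}"
    unfolding restrict_q_def by auto
  have "\<not> acyclic {(x, y). x \<in> S \<and> y \<in> S \<and> B x y > 0}" if cyc: "has_cycle3 S B"
  proof -
    obtain a b c where "a \<in> S" "b \<in> S" "c \<in> S" "cycle3 B a b c"
      using cyc unfolding has_cycle3_def by blast
    then have "(a, a) \<in> {(x, y). x \<in> S \<and> y \<in> S \<and> B x y > 0}\<^sup>+"
      unfolding cycle3_def by (blast intro: trancl_into_trancl)
    then show ?thesis unfolding acyclic_def by blast
  qed
  moreover have "finite S" using card by (intro card_ge_0_finite) simp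
  ultimately show ?thesis
    unfolding oriented_3cycle_def rel using card acyclic_if_no_cycle3[OF skew _ tournament] by auto
qed

lemma has_cycle3_mutate_if_cycle_preserving:
  assumes skew: "skew_symmetric B" and card: "card S = 3" and k: "k \<in> S"
    and tournament: "\<And>i j. i \<in> S \<Longrightarrow> j \<in> S \<Longrightarrow> i \<noteq> j \<Longrightarrow> B i j \<noteq> 0"
    and tournament': "\<And>i j. i \<in> S \<Longrightarrow> j \<in> S \<Longrightarrow> i \<noteq> j \<Longrightarrow> mutate k B i j \<noteq> 0"
    and preserving: "cycle_preserving S {} (restrict_q S B) k"
    and "has_cycle3 S B"
  shows "has_cycle3 S (mutate k B)"
proof -
  obtain i j where "S = {k, i, j}" using cycle3_through[OF skew card assms(7) k] by blast
  then have "{i, k, j} \<subseteq> S" "{i, k, j} = S" by auto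
  moreover have "oriented_3cycle {} (restrict_q S B) S"
    using oriented_3cycle_restrict_q_iff[OF skew card tournament] assms(7) by blast
  ultimately have "oriented_3cycle {} (mutate k (restrict_q S B)) S"
    using preserving unfolding cycle_preserving_def by metis
  then have "oriented_3cycle {} (restrict_q S (mutate k B)) S" by (simp add: restrict_q_mutate k)
  then show ?thesis
    using oriented_3cycle_restrict_q_iff[OF skew_symmetric_mutate[OF skew] card tournament'] by blast
qed

section \<open>Two integer dynamical systems\<close>

lemma antimono_nat_eventually_const:
  fixes f :: "nat \<Rightarrow> nat"
  assumes "antimono f"
  obtains N where "\<And>n. n \<ge> N \<Longrightarrow> f n = f N"
proof -
  obtain N where "\<And>n. f N \<le> f n" using ex_has_least_nat[of "\<lambda>_. True" 0 f] by blast
  with antimonoD[OF assms] show ?thesis using that by (meson antisym)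
qed

lemma le_mult_if_ge_2: "(a::int) \<ge> 2 \<Longrightarrow> t \<ge> 0 \<Longrightarrow> 2 * t \<le> a * t"
  by (simp add: mult_right_mono)

lemma le_mult_pred_if_ge_2: "(a::int) \<ge> 2 \<Longrightarrow> t \<ge> 0 \<Longrightarrow> t \<le> t * (a - 1)"
  using mult_left_mono[of 1 "a - 1" t] by simp

text \<open>Coordinates of a frozen vertex f relative to an oriented 3-cycle k \<rightarrow> i \<rightarrow> j \<rightarrow> k
  of the mutable part: x = B i f, y = B f j, z = B f k, with weights a = B k i, b = B i j and
  d = B j k.  Out-steps are mutations at i, in-steps mutations at j.\<close>

definition absorbing :: "int \<Rightarrow> int \<Rightarrow> int \<Rightarrow> int \<Rightarrow> int \<Rightarrow> bool" where
  "absorbing x y z a d \<longleftrightarrow> x \<ge> 1 \<and> y \<ge> 1 \<and> - (y * (d - 1)) \<le> z \<and> z \<le> x * (a - 1)"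

definition trap_out :: "int \<Rightarrow> int \<Rightarrow> int \<Rightarrow> int \<Rightarrow> bool" where
  "trap_out x y z a \<longleftrightarrow> x \<ge> 1 \<and> y \<le> 0 \<and> 1 \<le> z \<and> z \<le> x * (a - 1)"

definition trap_in :: "int \<Rightarrow> int \<Rightarrow> int \<Rightarrow> int \<Rightarrow> bool" where
  "trap_in x y z d \<longleftrightarrow> x \<le> 0 \<and> y \<ge> 1 \<and> - (y * (d - 1)) \<le> z \<and> z \<le> -1"

lemma absorbing_swap: "absorbing y x (- z) d a = absorbing x y z a d"
  by (auto simp: absorbing_def)

lemma trap_in_swap: "trap_in y x (- z) a = trap_out x y z a"
  and trap_out_swap: "trap_out y x (- z) d = trap_in x y z d"
  by (auto simp: trap_out_def trap_in_def)

lemma out_step_regions: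
  fixes x y z a b x' y' z' :: int
  assumes a: "a \<ge> 2" and b: "b \<ge> 2"
    and x': "x' = a * max x 0 - z" and y': "y' = y + b * max (- x) 0" and z': "z' = x"
  shows "absorbing x y z a d \<Longrightarrow> absorbing x' y' z' a b"
    and "trap_out x y z a \<Longrightarrow> trap_out x' y' z' a"
    and "trap_in x y z d \<Longrightarrow> absorbing x' y' z' a b"
proof -
  have grow: "x \<le> x' \<and> x' \<le> x' * (a - 1)" if "x \<ge> 1" "z \<le> x * (a - 1)"
  proof -
    have "x' = a * x - z" using x' that(1) by simp
    with that have "x \<le> x'" by (simp add: algebra_simps)
    with that(1) show ?thesis using le_mult_pred_if_ge_2[OF a, of x'] by simp
  qed
  show "absorbing x y z a d \<Longrightarrow> absorbing x' y' z' a b"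
  proof -
    assume "absorbing x y z a d"
    then have "x \<ge> 1" "y \<ge> 1" "z \<le> x * (a - 1)" by (auto simp: absorbing_def)
    moreover have "0 \<le> y * (b - 1)" using \<open>y \<ge> 1\<close> b by simp
    ultimately show ?thesis using grow y' z' unfolding absorbing_def by auto
  qed
  show "trap_out x y z a \<Longrightarrow> trap_out x' y' z' a"
  proof -
    assume "trap_out x y z a"
    then have "x \<ge> 1" "y \<le> 0" "z \<le> x * (a - 1)" by (auto simp: trap_out_def)
    then show ?thesis using grow y' z' unfolding trap_out_def by auto
  qed
  show "trap_in x y z d \<Longrightarrow> absorbing x' y' z' a b"
  proof -
    assume "trap_in x y z d"
    then have x0: "x \<le> 0" and y1: "y \<ge> 1" and z1: "z \<le> -1" by (auto simp: trap_in_def)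
    have "2 * (- x) \<le> b * (- x)" using le_mult_if_ge_2[OF b, of "- x"] x0 by linarith
    then have "y' \<ge> - x" "y' \<ge> 1" using y' y1 x0 by simp_all
    moreover have "y' \<le> y' * (b - 1)" using le_mult_pred_if_ge_2[OF b] \<open>y' \<ge> 1\<close> by simp
    moreover have "0 \<le> x' * (a - 1)" using x' x0 z1 a by (simp add: mult_nonpos_nonneg)
    ultimately show ?thesis using x' z' x0 z1 unfolding absorbing_def by (intro conjI; linarith)
  qed
qed

lemma out_step_lands:
  fixes x y z a b x' y' z' :: int
  assumes a: "a \<ge> 2" and b: "b \<ge> 2"
    and x': "x' = a * max x 0 - z" and y': "y' = y + b * max (- x) 0" and z': "z' = x"
  shows "x \<ge> 1 \<Longrightarrow> 2 * z \<le> a * x \<Longrightarrow> absorbing x' y' z' a b \<or> trap_out x' y' z' a"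
    and "x \<le> -1 \<Longrightarrow> \<bar>y\<bar> \<le> \<bar>y'\<bar> \<Longrightarrow> absorbing x' y' z' a b \<or> trap_in x' y' z' b"
proof -
  assume x1: "x \<ge> 1" and "2 * z \<le> a * x"
  moreover have "2 * x \<le> a * x" using le_mult_if_ge_2[OF a] x1 by simp
  moreover have "x' = a * x - z" using x' x1 by simp
  ultimately have "x \<le> x'" by linarith
  moreover have "x' \<le> x' * (a - 1)" using le_mult_pred_if_ge_2[OF a] x1 calculation by simp
  moreover have "y' \<le> 0 \<or> 0 \<le> y' * (b - 1)" using b by (cases "y' \<le> 0") simp_all
  ultimately show "absorbing x' y' z' a b \<or> trap_out x' y' z' a"
    using x1 z' unfolding absorbing_def trap_out_def by (smt (verit))
next
  assume x1: "x \<le> -1" and "\<bar>y\<bar> \<le> \<bar>y'\<bar>"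
  moreover have "2 * (- x) \<le> b * (- x)" using le_mult_if_ge_2[OF b, of "- x"] x1 by linarith
  moreover have "y' = y + b * (- x)" using y' x1 by simp
  ultimately have "y' \<ge> - x" by linarith
  moreover have "y' \<le> y' * (b - 1)" using le_mult_pred_if_ge_2[OF b, of y'] x1 calculation by simp
  moreover have "x' \<le> 0 \<or> 0 \<le> x' * (a - 1)" using a by (cases "x' \<le> 0") simp_all
  ultimately show "absorbing x' y' z' a b \<or> trap_in x' y' z' b"
    using x1 z' unfolding absorbing_def trap_in_def by (smt (verit))
qed

lemma out_step_escape:
  fixes x y z a b x' y' z' :: int
  assumes a: "a \<ge> 2" and b: "b \<ge> 2"
    and x': "x' = a * max x 0 - z" and y': "y' = y + b * max (- x) 0" and z': "z' = x"
    and escape: "\<not> (absorbing x' y' z' a b \<or> trap_out x' y' z' a \<or> trap_in x' y' z' b)"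
  shows "\<bar>x'\<bar> + \<bar>y'\<bar> + \<bar>z'\<bar> < \<bar>x\<bar> + \<bar>y\<bar> + \<bar>z\<bar>
    \<or> (x = 0 \<and> \<bar>x'\<bar> + \<bar>y'\<bar> + \<bar>z'\<bar> = \<bar>x\<bar> + \<bar>y\<bar> + \<bar>z\<bar>)"
proof -
  consider "x \<ge> 1" "a * x < 2 * z" | "x = 0" | "x \<le> -1" "\<bar>y'\<bar> < \<bar>y\<bar>"
    using out_step_lands[OF a b x' y' z'] escape by linarith
  then show ?thesis
  proof cases
    case 1
    moreover have "2 * x \<le> a * x" using le_mult_if_ge_2[OF a] 1 by simp
    moreover have "x' = a * x - z" using x' 1 by simp
    ultimately have "\<bar>x'\<bar> < \<bar>z\<bar>" by linarith
    then show ?thesis using 1 y' z' by simp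
  qed (use x' y' z' in simp_all)
qed

lemma in_step_regions:
  fixes x y z a b d x' y' z' :: int
  assumes b: "b \<ge> 2" and d: "d \<ge> 2"
    and x': "x' = x + b * max (- y) 0" and y': "y' = d * max y 0 + z" and z': "z' = - y"
  shows "absorbing x y z a d \<Longrightarrow> absorbing x' y' z' b d"
    and "trap_in x y z d \<Longrightarrow> trap_in x' y' z' d"
    and "trap_out x y z a \<Longrightarrow> absorbing x' y' z' b d"
proof -
  have "y' = d * max y 0 - (- z)" "- z' = y" using y' z' by simp_all
  note swapped = out_step_regions[OF d b this(1) x' this(2)]
  show "absorbing x y z a d \<Longrightarrow> absorbing x' y' z' b d"
    using swapped(1) by (simp add: absorbing_swap)
  show "trap_in x y z d \<Longrightarrow> trap_in x' y' z' d"
    using swapped(2) by (simp add: trap_out_swap)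
  show "trap_out x y z a \<Longrightarrow> absorbing x' y' z' b d"
    using swapped(3) by (simp add: absorbing_swap trap_in_swap)
qed

lemma in_step_escape:
  fixes x y z a b d x' y' z' :: int
  assumes b: "b \<ge> 2" and d: "d \<ge> 2"
    and x': "x' = x + b * max (- y) 0" and y': "y' = d * max y 0 + z" and z': "z' = - y"
    and escape: "\<not> (absorbing x' y' z' b d \<or> trap_out x' y' z' b \<or> trap_in x' y' z' d)"
  shows "\<bar>x'\<bar> + \<bar>y'\<bar> + \<bar>z'\<bar> < \<bar>x\<bar> + \<bar>y\<bar> + \<bar>z\<bar>
    \<or> (y = 0 \<and> \<bar>x'\<bar> + \<bar>y'\<bar> + \<bar>z'\<bar> = \<bar>x\<bar> + \<bar>y\<bar> + \<bar>z\<bar>)"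
proof -
  have "y' = d * max y 0 - (- z)" "- z' = y" using y' z' by simp_all
  moreover have "\<not> (absorbing y' x' (- z') d b \<or> trap_out y' x' (- z') d \<or> trap_in y' x' (- z') b)"
    using escape by (simp add: absorbing_swap trap_out_swap trap_in_swap)
  ultimately have "\<bar>y'\<bar> + \<bar>x'\<bar> + \<bar>- z'\<bar> < \<bar>y\<bar> + \<bar>x\<bar> + \<bar>- z\<bar>
      \<or> (y = 0 \<and> \<bar>y'\<bar> + \<bar>x'\<bar> + \<bar>- z'\<bar> = \<bar>y\<bar> + \<bar>x\<bar> + \<bar>- z\<bar>)"
    by (rule out_step_escape[OF d b _ x'])
  then show ?thesis by (simp add: ac_simps)
qed

locale cycle_dynamics =
  fixes x y z a b d :: "nat \<Rightarrow> int" and at_out :: "nat \<Rightarrow> bool"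
  assumes weights: "a n \<ge> 2" "b n \<ge> 2" "d n \<ge> 2"
    and out_step: "at_out n \<Longrightarrow> x (Suc n) = a n * max (x n) 0 - z n
      \<and> y (Suc n) = y n + b n * max (- x n) 0 \<and> z (Suc n) = x n \<and> a (Suc n) = a n \<and> d (Suc n) = b n"
    and in_step: "\<not> at_out n \<Longrightarrow> x (Suc n) = x n + b n * max (- y n) 0
      \<and> y (Suc n) = d n * max (y n) 0 + z n \<and> z (Suc n) = - y n \<and> a (Suc n) = b n \<and> d (Suc n) = d n"
    and nonzero: "\<not> (x n = 0 \<and> y n = 0 \<and> z n = 0)"
    and switching: "frequently (\<lambda>n. at_out n \<noteq> at_out (Suc n)) sequentially"
begin

definition absorbed :: "nat \<Rightarrow> bool" where
  "absorbed n \<longleftrightarrow> absorbing (x n) (y n) (z n) (a n) (d n)"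

definition trapped_out :: "nat \<Rightarrow> bool" where
  "trapped_out n \<longleftrightarrow> trap_out (x n) (y n) (z n) (a n)"

definition trapped_in :: "nat \<Rightarrow> bool" where
  "trapped_in n \<longleftrightarrow> trap_in (x n) (y n) (z n) (d n)"

definition l1_norm :: "nat \<Rightarrow> int" where
  "l1_norm n = \<bar>x n\<bar> + \<bar>y n\<bar> + \<bar>z n\<bar>"

lemma out_move:
  assumes "at_out n"
  shows "absorbed n \<Longrightarrow> absorbed (Suc n)"
    and "trapped_out n \<Longrightarrow> trapped_out (Suc n)"
    and "trapped_in n \<Longrightarrow> absorbed (Suc n)"
    and "\<not> (absorbed (Suc n) \<or> trapped_out (Suc n) \<or> trapped_in (Suc n)) \<Longrightarrow>
      l1_norm (Suc n) < l1_norm n \<or> (x n = 0 \<and> l1_norm (Suc n) = l1_norm n)"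
proof -
  have e: "x (Suc n) = a n * max (x n) 0 - z n" "y (Suc n) = y n + b n * max (- x n) 0"
    "z (Suc n) = x n" "a (Suc n) = a n" "d (Suc n) = b n"
    using out_step[OF assms] by simp_all
  note regions = out_step_regions[OF weights(1,2) e(1-3)]
  show "absorbed n \<Longrightarrow> absorbed (Suc n)" "trapped_out n \<Longrightarrow> trapped_out (Suc n)"
    "trapped_in n \<Longrightarrow> absorbed (Suc n)"
    unfolding absorbed_def trapped_out_def trapped_in_def e(4,5) by (fact regions)+
  show "\<not> (absorbed (Suc n) \<or> trapped_out (Suc n) \<or> trapped_in (Suc n)) \<Longrightarrow>
      l1_norm (Suc n) < l1_norm n \<or> (x n = 0 \<and> l1_norm (Suc n) = l1_norm n)"
    unfolding absorbed_def trapped_out_def trapped_in_def l1_norm_def e(4,5)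
    by (rule out_step_escape[OF weights(1,2) e(1-3)])
qed

lemma in_move:
  assumes "\<not> at_out n"
  shows "absorbed n \<Longrightarrow> absorbed (Suc n)"
    and "trapped_in n \<Longrightarrow> trapped_in (Suc n)"
    and "trapped_out n \<Longrightarrow> absorbed (Suc n)"
    and "\<not> (absorbed (Suc n) \<or> trapped_out (Suc n) \<or> trapped_in (Suc n)) \<Longrightarrow>
      l1_norm (Suc n) < l1_norm n \<or> (y n = 0 \<and> l1_norm (Suc n) = l1_norm n)"
proof -
  have e: "x (Suc n) = x n + b n * max (- y n) 0" "y (Suc n) = d n * max (y n) 0 + z n"
    "z (Suc n) = - y n" "a (Suc n) = b n" "d (Suc n) = d n"
    using in_step[OF assms] by simp_all
  note regions = in_step_regions[OF weights(2,3) e(1-3)]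
  show "absorbed n \<Longrightarrow> absorbed (Suc n)" "trapped_in n \<Longrightarrow> trapped_in (Suc n)"
    "trapped_out n \<Longrightarrow> absorbed (Suc n)"
    unfolding absorbed_def trapped_out_def trapped_in_def e(4,5) by (fact regions)+
  show "\<not> (absorbed (Suc n) \<or> trapped_out (Suc n) \<or> trapped_in (Suc n)) \<Longrightarrow>
      l1_norm (Suc n) < l1_norm n \<or> (y n = 0 \<and> l1_norm (Suc n) = l1_norm n)"
    unfolding absorbed_def trapped_out_def trapped_in_def l1_norm_def e(4,5)
    by (rule in_step_escape[OF weights(2,3) e(1-3)])
qed

lemma absorbed_mono:
  assumes "absorbed m" "m \<le> n" shows "absorbed n"
  using assms(2) by (induction rule: dec_induct) (use assms(1) out_move(1) in_move(1) in blast)+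

lemma absorbed_if_trapped_out:
  assumes "trapped_out n" shows "\<exists>m. absorbed m"
proof (rule ccontr)
  assume never: "\<nexists>m. absorbed m"
  have stays: "at_out k \<and> trapped_out (Suc k)" if "trapped_out k" for k
    using that out_move(2) in_move(3) never by blast
  have "trapped_out (n + k)" for k by (induction k) (use assms stays in auto)
  moreover obtain n' where "n' \<ge> n" "\<not> at_out n'"
    using switching unfolding frequently_sequentially by (metis le_SucI)
  ultimately show False using stays by (metis le_add_diff_inverse)
qed

lemma absorbed_if_trapped_in:
  assumes "trapped_in n" shows "\<exists>m. absorbed m"
proof (rule ccontr)
  assume never: "\<nexists>m. absorbed m"
  have stays: "\<not> at_out k \<and> trapped_in (Suc k)" if "trapped_in k" for k
    using that in_move(2) out_move(3) never by blast
  have "trapped_in (n + k)" for k by (induction k) (use assms stays in auto)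
  moreover obtain n' where "n' \<ge> n" "at_out n'"
    using switching unfolding frequently_sequentially by (metis le_SucI)
  ultimately show False using stays by (metis le_add_diff_inverse)
qed

text \<open>Outside the three regions the l1-norm never grows, and it can only stay constant on a
  degenerate orbit, which is incompatible with switching between the two kinds of steps.\<close>

lemma enters_some_region: "\<exists>n. absorbed n \<or> trapped_out n \<or> trapped_in n"
proof (rule ccontr)
  assume none: "\<not> ?thesis"
  have step: "l1_norm (Suc n) < l1_norm n
      \<or> (l1_norm (Suc n) = l1_norm n \<and> (if at_out n then x n = 0 else y n = 0))" for n
    using out_move(4)[of n] in_move(4)[of n] none by (cases "at_out n") auto
  have "antimono (\<lambda>n. nat (l1_norm n))"
    unfolding antimono_iff_le_Suc using step by (metis less_imp_le nat_mono order.refl)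
  then obtain N where N: "\<And>n. n \<ge> N \<Longrightarrow> nat (l1_norm n) = nat (l1_norm N)"
    using antimono_nat_eventually_const by blast
  have degenerate: "if at_out n then x n = 0 else y n = 0" if "n \<ge> N" for n
  proof -
    have "l1_norm n \<ge> 0" "l1_norm (Suc n) \<ge> 0" unfolding l1_norm_def by simp_all
    then have "l1_norm (Suc n) = l1_norm n" using N[of n] N[of "Suc n"] that by simp
    then show ?thesis using step[of n] by auto
  qed
  have z0: "z (Suc n) = 0" if "n \<ge> N" for n
    using degenerate[OF that] out_step[of n] in_step[of n] by (cases "at_out n") auto
  obtain n where n: "n \<ge> Suc N" "at_out n \<noteq> at_out (Suc n)"
    using switching unfolding frequently_sequentially by blast
  then have "z n = 0" "z (Suc n) = 0" using z0[of "n - 1"] z0[of n] by simp_all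
  moreover have "x n = 0 \<and> y (Suc n) = 0 \<or> y n = 0 \<and> x (Suc n) = 0"
    using degenerate[of n] degenerate[of "Suc n"] n by (cases "at_out n") auto
  ultimately show False
    using nonzero[of "Suc n"] out_step[of n] in_step[of n] by (cases "at_out n") auto
qed

theorem eventually_absorbed: "\<forall>\<^sub>F n in sequentially. absorbed n"
proof -
  obtain m where "absorbed m"
    using enters_some_region absorbed_if_trapped_out absorbed_if_trapped_in by blast
  then show ?thesis unfolding eventually_sequentially using absorbed_mono by blast
qed

end

locale max_recurrence =
  fixes e a c :: "nat \<Rightarrow> int"
  assumes weights: "a n \<ge> 2" "c n \<ge> 2"
    and recurrence: "e (n + 3) = - e n + a n * max (e (n + 1)) 0 + c n * max (e (n + 2)) 0"
    and nonzero: "\<not> (e n = 0 \<and> e (n + 1) = 0 \<and> e (n + 2) = 0)"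
begin

definition rising :: "nat \<Rightarrow> bool" where
  "rising n \<longleftrightarrow> e n \<ge> 1 \<and> e (n + 1) \<ge> 1 \<and> e (n + 2) \<ge> e n"

definition l1_norm :: "nat \<Rightarrow> int" where
  "l1_norm n = \<bar>e n\<bar> + \<bar>e (n + 1)\<bar> + \<bar>e (n + 2)\<bar>"

lemma recurrence_lower: "2 * max (e (n + 1)) 0 + 2 * max (e (n + 2)) 0 \<le> e (n + 3) + e n"
  using le_mult_if_ge_2[OF weights(1), of "max (e (n + 1)) 0" n]
    le_mult_if_ge_2[OF weights(2), of "max (e (n + 2)) 0" n] recurrence[of n] by simp

lemma rising_Suc:
  assumes "rising n" shows "rising (Suc n)" and "e (n + 2) < e (n + 3)"
proof -
  have "e n \<ge> 1" "e (n + 1) \<ge> 1" "e (n + 2) \<ge> e n" using assms unfolding rising_def by auto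
  moreover have "e (n + 3) + e n \<ge> 2 * e (n + 1) + 2 * e (n + 2)"
    using recurrence_lower[of n] calculation by simp
  ultimately show "rising (Suc n)" "e (n + 2) < e (n + 3)"
    unfolding rising_def by (simp_all add: numeral_eq_Suc)
qed

lemma rising_or_shrinking:
  "rising (n + 1) \<or> rising (n + 2) \<or> rising (n + 3) \<or> l1_norm (n + 1) < l1_norm n
    \<or> (l1_norm (n + 1) = l1_norm n \<and> e (n + 1) \<le> 0 \<and> e (n + 2) \<le> 0 \<and> e (n + 3) = - e n)"
proof -
  have e: "e (n + 1 + 1) = e (n + 2)" "e (n + 1 + 2) = e (n + 3)" "e (n + 2 + 1) = e (n + 3)"
    "e (n + 2 + 2) = e (n + 4)" "e (n + 3 + 1) = e (n + 4)" "e (n + 3 + 2) = e (n + 5)"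
    "e (n + 1 + 3) = e (n + 4)" "e (n + 2 + 3) = e (n + 5)"
    by (simp_all add: numeral_eq_Suc)
  have r: "2 * max (e (n + 1)) 0 + 2 * max (e (n + 2)) 0 \<le> e (n + 3) + e n"
    "2 * max (e (n + 2)) 0 + 2 * max (e (n + 3)) 0 \<le> e (n + 4) + e (n + 1)"
    "2 * max (e (n + 3)) 0 + 2 * max (e (n + 4)) 0 \<le> e (n + 5) + e (n + 2)"
    using recurrence_lower[of n] recurrence_lower[of "n + 1"] recurrence_lower[of "n + 2"]
    by (simp_all only: e)
  have m: "e k \<le> max (e k) 0" "0 \<le> max (e k) 0" for k by simp_all
  consider (nonpos) "e (n + 1) \<le> 0" "e (n + 2) \<le> 0"
    | (shrink) "e (n + 1) \<ge> 1 \<or> e (n + 2) \<ge> 1" "e (n + 3) < e n"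
    | (pos_pos) "e (n + 1) \<ge> 1" "e (n + 2) \<ge> 1" "e (n + 3) \<ge> e n"
    | (pos_nonpos) "e (n + 1) \<ge> 1" "e (n + 2) \<le> 0" "e (n + 3) \<ge> e n"
    | (nonpos_pos) "e (n + 1) \<le> 0" "e (n + 2) \<ge> 1" "e (n + 3) \<ge> e n"
    by linarith
  then show ?thesis
  proof cases
    case nonpos
    then have "e (n + 3) = - e n" using recurrence[of n] by simp
    with nonpos show ?thesis unfolding l1_norm_def e by simp
  next
    case shrink
    then have "\<bar>e (n + 3)\<bar> < \<bar>e n\<bar>" using r(1) m[of "n + 1"] m[of "n + 2"] by linarith
    then show ?thesis unfolding l1_norm_def e by simp
  next
    case pos_pos
    then have "rising (n + 1)" using r(1) m[of "n + 1"] m[of "n + 2"]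
      unfolding rising_def e by linarith
    then show ?thesis by blast
  next
    case pos_nonpos
    then have "e (n + 3) \<ge> e (n + 1)" using r(1) m[of "n + 1"] m[of "n + 2"] by linarith
    then have "e (n + 4) \<ge> e (n + 3)" using pos_nonpos r(2) m[of "n + 2"] m[of "n + 3"] by linarith
    then have "rising (n + 3)" using pos_nonpos \<open>e (n + 3) \<ge> e (n + 1)\<close> r(3) m[of "n + 3"] m[of "n + 4"]
      unfolding rising_def e by linarith
    then show ?thesis by blast
  next
    case nonpos_pos
    then have "e (n + 3) \<ge> e (n + 2)" using r(1) m[of "n + 1"] m[of "n + 2"] by linarith
    then have "rising (n + 2)" using nonpos_pos r(2) m[of "n + 2"] m[of "n + 3"]
      unfolding rising_def e by linarith
    then show ?thesis by blast
  qed
qed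

lemma exists_rising: "\<exists>n. rising n"
proof (rule ccontr)
  assume none: "\<nexists>n. rising n"
  then have step: "l1_norm (Suc n) < l1_norm n \<or> (l1_norm (Suc n) = l1_norm n
      \<and> e (n + 1) \<le> 0 \<and> e (n + 2) \<le> 0 \<and> e (n + 3) = - e n)" for n
    using rising_or_shrinking[of n] by auto
  have "antimono (\<lambda>n. nat (l1_norm n))"
    unfolding antimono_iff_le_Suc using step by (metis less_imp_le nat_mono order.refl)
  then obtain N where N: "\<And>n. n \<ge> N \<Longrightarrow> nat (l1_norm n) = nat (l1_norm N)"
    using antimono_nat_eventually_const by blast
  have degenerate: "e (n + 1) \<le> 0 \<and> e (n + 2) \<le> 0 \<and> e (n + 3) = - e n" if "n \<ge> N" for n
  proof -
    have "l1_norm n \<ge> 0" "l1_norm (Suc n) \<ge> 0" unfolding l1_norm_def by simp_all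
    then have "l1_norm (Suc n) = l1_norm n" using N[of n] N[of "Suc n"] that by simp
    then show ?thesis using step[of n] by auto
  qed
  have "e (N + 1) = 0" "e (N + 2) = 0" "e (N + 3) = 0"
    using degenerate[of N] degenerate[of "N + 1"] degenerate[of "N + 2"]
      degenerate[of "N + 3"] degenerate[of "N + 4"]
    by (simp_all add: numeral_eq_Suc)
  then show False using nonzero[of "N + 1"] by (simp add: numeral_eq_Suc)
qed

theorem eventually_increasing: "\<forall>\<^sub>F n in sequentially. 1 \<le> e n \<and> e n < e (Suc n)"
proof -
  obtain N where N: "rising N" using exists_rising by blast
  have "rising n" if "n \<ge> N" for n
    using that by (induction rule: dec_induct) (use N rising_Suc(1) in auto)
  then have "1 \<le> e (n + 2) \<and> e (n + 2) < e (Suc (n + 2))" if "n \<ge> N" for n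
    using that rising_Suc(2)[of n] unfolding rising_def by (simp add: numeral_eq_Suc)
  then have "\<forall>\<^sub>F n in sequentially. 1 \<le> e (n + 2) \<and> e (n + 2) < e (Suc (n + 2))"
    unfolding eventually_sequentially by blast
  then show ?thesis by (rule eventually_sequentially_seg[THEN iffD1])
qed

end

section \<open>Mutation runs on three mutable vertices\<close>

definition is_source :: "'v set \<Rightarrow> ('v \<Rightarrow> 'v \<Rightarrow> int) \<Rightarrow> 'v \<Rightarrow> bool" where
  "is_source S B k \<longleftrightarrow> (\<forall>v\<in>S. v \<noteq> k \<longrightarrow> B k v > 0)"

definition is_sink :: "'v set \<Rightarrow> ('v \<Rightarrow> 'v \<Rightarrow> int) \<Rightarrow> 'v \<Rightarrow> bool" where
  "is_sink S B k \<longleftrightarrow> (\<forall>v\<in>S. v \<noteq> k \<longrightarrow> B v k > 0)"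

lemma mutate_at_source:
  assumes skew: "skew_symmetric B" and source: "is_source S B k"
    and v: "v \<in> S" "v \<noteq> k" and w: "w \<noteq> k"
  shows "mutate k B w v = B w v + max (B w k) 0 * B k v"
proof -
  have "B k v > 0" using source v unfolding is_source_def by blast
  then have "max (B v k) 0 = 0" using skew_symmetricD[OF skew, of v k] by simp
  with \<open>B k v > 0\<close> show ?thesis using mutate_off[OF w v(2), of B] by simp
qed

locale rank3_run =
  fixes S :: "'v set" and B :: "'v \<Rightarrow> 'v \<Rightarrow> int" and m :: "nat \<Rightarrow> 'v"
  assumes skew: "skew_symmetric B"
    and card_S: "card S = 3"
    and m_in_S: "m n \<in> S"
    and reduced: "m (Suc n) \<noteq> m n"
    and abundant: "i \<in> S \<Longrightarrow> j \<in> S \<Longrightarrow> i \<noteq> j \<Longrightarrow> \<bar>Qseq B m n i j\<bar> \<ge> 2"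
begin

abbreviation Q :: "nat \<Rightarrow> 'v \<Rightarrow> 'v \<Rightarrow> int" where
  "Q \<equiv> Qseq B m"

lemma skew_Q: "skew_symmetric (Q n)"
  using skew_symmetric_Qseq[OF skew] .

lemma Q_antisym: "Q n i j = - Q n j i"
  using skew_symmetricD[OF skew_Q] .

lemma Q_nonzero: "i \<in> S \<Longrightarrow> j \<in> S \<Longrightarrow> i \<noteq> j \<Longrightarrow> Q n i j \<noteq> 0"
  using abundant[of i j n] by auto

lemma Q_pos_ge_2: "i \<in> S \<Longrightarrow> j \<in> S \<Longrightarrow> Q n i j > 0 \<Longrightarrow> Q n i j \<ge> 2"
  using abundant[of i j n] skew_symmetric_diag[OF skew_Q, of n i] by (cases "i = j") auto

text \<open>An in-neighbour p and an out-neighbour q of m n would satisfy p \<rightarrow> q in the acyclic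
  quiver Q n, and mutating at m n would create the 3-cycle p \<rightarrow> q \<rightarrow> m n \<rightarrow> p.\<close>

lemma source_or_sink:
  assumes "\<not> has_cycle3 S (Q n)" "\<not> has_cycle3 S (Q (Suc n))"
  shows "is_source S (Q n) (m n) \<or> is_sink S (Q n) (m n)"
proof (rule ccontr)
  let ?k = "m n"
  assume "\<not> ?thesis"
  then obtain p q where p: "p \<in> S" "p \<noteq> ?k" "\<not> Q n ?k p > 0"
    and q: "q \<in> S" "q \<noteq> ?k" "\<not> Q n q ?k > 0"
    unfolding is_source_def is_sink_def by blast
  have k: "?k \<in> S" by (rule m_in_S)
  have "Q n ?k p \<noteq> 0" "Q n q ?k \<noteq> 0" using Q_nonzero k p(1,2) q(1,2) by metis+
  then have pk: "Q n p ?k > 0" and kq: "Q n ?k q > 0"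
    using p(3) q(3) Q_antisym[of n p ?k] Q_antisym[of n ?k q] by linarith+
  have "p \<noteq> q" using p(3) kq by blast
  have "\<not> Q n q p > 0"
    using assms(1) k p(1) q(1) pk kq unfolding has_cycle3_def cycle3_def by blast
  then have pq: "Q n p q > 0"
    using Q_nonzero[OF p(1) q(1) \<open>p \<noteq> q\<close>, of n] Q_antisym[of n q p] by linarith
  have "Q (Suc n) p q = Q n p q + max (Q n p ?k) 0 * max (Q n ?k q) 0"
    using mutate_off[OF p(2) q(2), of "Q n"] Q_antisym[of n q ?k] kq by simp
  also have "\<dots> > 0" using pq by (simp add: add_pos_nonneg)
  finally have "cycle3 (Q (Suc n)) p q ?k"
    unfolding cycle3_def using pk kq Q_antisym[of n q ?k] Q_antisym[of n ?k p]
    by (simp add: mutate_row mutate_col)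
  then show False using assms(2) k p(1) q(1) unfolding has_cycle3_def by blast
qed

text \<open>Mutating at a source m n turns the arrow between m n and m (n + 1) into one leaving
  m (n + 1), so m (n + 1) is no sink; dually for sinks.\<close>

lemma always_source_or_always_sink:
  assumes "\<And>n. \<not> has_cycle3 S (Q n)"
  shows "(\<forall>n. is_source S (Q n) (m n)) \<or> (\<forall>n. is_sink S (Q n) (m n))"
proof -
  have edge: "Q (Suc n) (m n) (m (Suc n)) = - Q n (m n) (m (Suc n))" for n
    by (simp add: mutate_row)
  have next_source: "is_source S (Q (Suc n)) (m (Suc n))" if "is_source S (Q n) (m n)" for n
  proof -
    have "Q n (m n) (m (Suc n)) > 0" using that m_in_S reduced unfolding is_source_def by metis
    then have "\<not> is_sink S (Q (Suc n)) (m (Suc n))"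
      using edge[of n] m_in_S reduced unfolding is_sink_def by (metis neg_less_0_iff_less less_asym)
    then show ?thesis using source_or_sink assms by blast
  qed
  have next_sink: "is_sink S (Q (Suc n)) (m (Suc n))" if "is_sink S (Q n) (m n)" for n
  proof -
    have "Q n (m (Suc n)) (m n) > 0" using that m_in_S reduced unfolding is_sink_def by metis
    then have "Q (Suc n) (m (Suc n)) (m n) < 0"
      by (simp add: mutate_col)
    then have "\<not> is_source S (Q (Suc n)) (m (Suc n))"
      using m_in_S reduced unfolding is_source_def by (metis less_asym)
    then show ?thesis using source_or_sink assms by blast
  qed
  show ?thesis
  proof (cases "is_source S (Q 0) (m 0)")
    case True
    then have "is_source S (Q n) (m n)" for n by (induction n) (use next_source in auto)
    then show ?thesis by blast
  next
    case False
    then have "is_sink S (Q 0) (m 0)" using source_or_sink assms by blast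
    then have "is_sink S (Q n) (m n)" for n by (induction n) (use next_sink in auto)
    then show ?thesis by blast
  qed
qed

end

definition row_sign_pattern :: "'v set \<Rightarrow> ('v \<Rightarrow> 'v \<Rightarrow> int) \<Rightarrow> 'v \<Rightarrow> ('v \<Rightarrow> bool) \<Rightarrow> bool" where
  "row_sign_pattern S B f P \<longleftrightarrow> (\<forall>v\<in>S. (P v \<longrightarrow> B f v > 0) \<and> (\<not> P v \<longrightarrow> B f v < 0))"

context rank3_run
begin

lemma source_run_vertices:
  assumes source: "\<And>n. is_source S (Q n) (m n)"
  shows "S = {m n, m (n + 1), m (n + 2)}" and "m (n + 3) = m n"
proof -
  have skip: "m (Suc (Suc n)) \<noteq> m n" for n
  proof
    assume eq: "m (Suc (Suc n)) = m n"
    obtain w where w: "S = {m n, m (Suc n), w}" "w \<noteq> m n" "w \<noteq> m (Suc n)"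
      using card3_third[OF card_S m_in_S m_in_S reduced[of n, symmetric]] by blast
    have "w \<in> S" using w(1) by blast
    have "Q (Suc n) (m n) (m (Suc n)) < 0"
      using source[of "Suc n"] m_in_S reduced[of n] Q_antisym[of "Suc n" "m n"]
      unfolding is_source_def by (metis neg_less_0_iff_less)
    then have "Q (Suc (Suc n)) (m n) w = Q (Suc n) (m n) w"
      using mutate_at_source[OF skew_Q source \<open>w \<in> S\<close> w(3), of "m n"] reduced[of n] by simp
    also have "\<dots> = - Q n (m n) w" by (simp add: mutate_row)
    finally show False
      using source[of n] source[of "Suc (Suc n)"] \<open>w \<in> S\<close> w(2) eq
      unfolding is_source_def by (metis neg_less_0_iff_less less_asym)
  qed
  show vertices: "S = {m n, m (n + 1), m (n + 2)}" for n
    using card3_eq[OF card_S m_in_S m_in_S m_in_S] reduced skip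
    by (metis Suc_1 add_2_eq_Suc' add_Suc_right Suc_eq_plus1)
  show "m (n + 3) = m n"
    using vertices[of n] m_in_S[of "n + 3"] reduced[of "n + 2"] skip[of "n + 1"]
    by (auto simp: numeral_eq_Suc)
qed

end

locale rank3_frozen = rank3_run S B m
  for S :: "'v set" and B :: "'v \<Rightarrow> 'v \<Rightarrow> int" and m :: "nat \<Rightarrow> 'v" +
  fixes f :: 'v
  assumes f_notin_S: "f \<notin> S"
    and f_adjacent: "\<exists>v\<in>S. B f v \<noteq> 0"
begin

lemma f_ne_m: "f \<noteq> m n"
  using f_notin_S m_in_S by metis

lemma row_nonzero: "\<exists>v\<in>S. Q n f v \<noteq> 0"
proof (induction n)
  case 0
  then show ?case using f_adjacent by simp
next
  case (Suc n)
  then obtain v where v: "v \<in> S" "Q n f v \<noteq> 0" by blast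
  show ?case
  proof (cases "Q n f (m n) = 0")
    case True
    then have "Q (Suc n) f v = Q n f v"
      using mutate_off[of f "m n" v "Q n"] f_ne_m Q_antisym[of n "m n" f]
      by (cases "v = m n") (simp_all add: mutate_col)
    then show ?thesis using v by (metis Qseq.simps(2))
  next
    case False
    then show ?thesis using m_in_S by (metis Qseq.simps(2) mutate_col neg_equal_0_iff_equal)
  qed
qed

context
  assumes source: "\<And>n. is_source S (Q n) (m n)"
begin

lemma source_row_step:
  "v \<in> S \<Longrightarrow> v \<noteq> m n \<Longrightarrow> Q (Suc n) f v = Q n f v + max (Q n f (m n)) 0 * Q n (m n) v"
  using mutate_at_source[OF skew_Q source _ _ f_ne_m] by simp

lemma source_row_recurrence:
  "max_recurrence (\<lambda>n. Q n f (m n)) (\<lambda>n. Q (Suc n) (m (Suc n)) (m n))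
    (\<lambda>n. Q (Suc (Suc n)) (m (Suc (Suc n))) (m n))"
proof
  fix n
  have m: "m (n + 1) = m (Suc n)" "m (n + 2) = m (Suc (Suc n))" "m (n + 3) = m n"
    using source_run_vertices(2)[OF source] by (simp_all add: numeral_eq_Suc)
  have S: "S = {m n, m (Suc n), m (Suc (Suc n))}"
    using source_run_vertices(1)[OF source] by (simp add: numeral_eq_Suc)
  then have ne: "m (Suc n) \<noteq> m n" "m (Suc (Suc n)) \<noteq> m n" "m (Suc (Suc n)) \<noteq> m (Suc n)"
    using card_S by (auto simp: card_insert_if split: if_splits)
  show "Q (Suc n) (m (Suc n)) (m n) \<ge> 2" "Q (Suc (Suc n)) (m (Suc (Suc n))) (m n) \<ge> 2"
    using source[of "Suc n"] source[of "Suc (Suc n)"] ne m_in_S Q_pos_ge_2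
    unfolding is_source_def by metis+
  have "Q (n + 3) f (m (n + 3)) = Q (Suc (Suc (Suc n))) f (m n)"
    using m by (simp add: numeral_eq_Suc)
  also have "\<dots> = - Q n f (m n) + max (Q (Suc n) f (m (Suc n))) 0 * Q (Suc n) (m (Suc n)) (m n)
      + max (Q (Suc (Suc n)) f (m (Suc (Suc n)))) 0 * Q (Suc (Suc n)) (m (Suc (Suc n))) (m n)"
    using source_row_step[of "m n" "Suc n"] source_row_step[of "m n" "Suc (Suc n)"] ne m_in_S
    by (simp add: mutate_col)
  finally show "Q (n + 3) f (m (n + 3)) = - Q n f (m n)
      + Q (Suc n) (m (Suc n)) (m n) * max (Q (n + 1) f (m (n + 1))) 0
      + Q (Suc (Suc n)) (m (Suc (Suc n))) (m n) * max (Q (n + 2) f (m (n + 2))) 0"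
    using m by (simp add: numeral_eq_Suc algebra_simps)
  show "\<not> (Q n f (m n) = 0 \<and> Q (n + 1) f (m (n + 1)) = 0 \<and> Q (n + 2) f (m (n + 2)) = 0)"
  proof
    assume zero: "Q n f (m n) = 0 \<and> Q (n + 1) f (m (n + 1)) = 0 \<and> Q (n + 2) f (m (n + 2)) = 0"
    then have "Q n f (m (Suc n)) = 0" "Q n f (m (Suc (Suc n))) = 0"
      using source_row_step[of "m (Suc n)" n] source_row_step[of "m (Suc (Suc n))" n]
        source_row_step[of "m (Suc (Suc n))" "Suc n"] ne m_in_S m
      by (simp_all add: numeral_eq_Suc)
    with zero have "\<forall>v\<in>S. Q n f v = 0" using S by auto
    then show False using row_nonzero[of n] by blast
  qed
qed

lemma source_run_sign_pattern:
  "\<forall>\<^sub>F n in sequentially. row_sign_pattern S (Q n) f (\<lambda>v. v \<noteq> m (n + 2))"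
proof -
  interpret max_recurrence "\<lambda>n. Q n f (m n)" "\<lambda>n. Q (Suc n) (m (Suc n)) (m n)"
    "\<lambda>n. Q (Suc (Suc n)) (m (Suc (Suc n))) (m n)"
    by (rule source_row_recurrence)
  obtain N where N: "\<And>n. n \<ge> N \<Longrightarrow> 1 \<le> Q n f (m n) \<and> Q n f (m n) < Q (Suc n) f (m (Suc n))"
    using eventually_increasing unfolding eventually_sequentially by blast
  have "row_sign_pattern S (Q (k + 2)) f (\<lambda>v. v \<noteq> m (k + 2 + 2))" if "k \<ge> N" for k
  proof -
    have e: "1 \<le> Q k f (m k)" "Q k f (m k) < Q (Suc k) f (m (Suc k))" "1 \<le> Q (k + 2) f (m (k + 2))"
      using N[of k] N[of "k + 2"] that by simp_all
    have S: "S = {m k, m (Suc k), m (k + 2)}" and m: "m (k + 3) = m k" "m (k + 4) = m (Suc k)"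
      using source_run_vertices[OF source, of k] source_run_vertices(2)[OF source, of "Suc k"]
      by (simp_all add: numeral_eq_Suc)
    then have ne: "m (Suc k) \<noteq> m k" "m (k + 2) \<noteq> m k" "m (k + 2) \<noteq> m (Suc k)"
      using card_S by (auto simp: card_insert_if split: if_splits)
    have "Q (Suc (Suc k)) f (m k) = - Q k f (m k) + Q (Suc k) f (m (Suc k)) * Q (Suc k) (m (Suc k)) (m k)"
      using source_row_step[of "m k" "Suc k"] ne m_in_S e by (simp add: mutate_col)
    moreover have "2 * Q (Suc k) f (m (Suc k)) \<le> Q (Suc k) f (m (Suc k)) * Q (Suc k) (m (Suc k)) (m k)"
      using le_mult_if_ge_2[OF weights(1)[of k], of "Q (Suc k) f (m (Suc k))"] e
      by (simp only: mult.commute)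
    ultimately have "Q (Suc (Suc k)) f (m k) > 0" using e(1,2) by linarith
    then have "Q (k + 2) f (m k) > 0" by (simp add: numeral_eq_Suc)
    moreover have "Q (k + 2) f (m (Suc k)) < 0" using e by (simp add: numeral_eq_Suc mutate_col)
    ultimately show ?thesis using e S m ne unfolding row_sign_pattern_def
      by (auto simp: numeral_eq_Suc)
  qed
  then have "\<forall>\<^sub>F k in sequentially. row_sign_pattern S (Q (k + 2)) f (\<lambda>v. v \<noteq> m (k + 2 + 2))"
    unfolding eventually_sequentially by blast
  then show ?thesis by (rule eventually_sequentially_seg[THEN iffD1])
qed

end

end

context rank3_run
begin

lemma cycle3_Suc:
  assumes "has_cycle3 S (Q (Suc (Suc t)))" and "cycle3 (Q (Suc t)) a b c" "S = {a, b, c}"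
    and "m (Suc t) = a"
  shows "cycle3 (Q (Suc (Suc t))) a c b"
  using cycle3_mutate[OF skew_Q assms(2)] assms(1,3,4) by simp

lemma cyclic_run_cycles:
  assumes cyclic: "\<And>n. has_cycle3 S (Q n)"
  obtains i j where "\<And>t. S = {m t, i t, j t}" and "\<And>t. cycle3 (Q (Suc t)) (m t) (i t) (j t)"
    and "\<And>t. m (Suc t) = i t \<and> i (Suc t) = m t \<and> j (Suc t) = j t
      \<or> m (Suc t) = j t \<and> i (Suc t) = i t \<and> j (Suc t) = m t"
proof -
  have "\<forall>t. \<exists>ij. S = {m t, fst ij, snd ij} \<and> cycle3 (Q (Suc t)) (m t) (fst ij) (snd ij)"
    using cycle3_through[OF skew_Q card_S cyclic m_in_S] by (metis fst_conv snd_conv)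
  then obtain ij where ij: "\<And>t. S = {m t, fst (ij t), snd (ij t)}"
    "\<And>t. cycle3 (Q (Suc t)) (m t) (fst (ij t)) (snd (ij t))"
    by metis
  define i where "i t = fst (ij t)" for t
  define j where "j t = snd (ij t)" for t
  have S: "S = {m t, i t, j t}" and cyc: "cycle3 (Q (Suc t)) (m t) (i t) (j t)" for t
    using ij unfolding i_def j_def by auto
  have "m (Suc t) = i t \<and> i (Suc t) = m t \<and> j (Suc t) = j t
      \<or> m (Suc t) = j t \<and> i (Suc t) = i t \<and> j (Suc t) = m t" for t
  proof -
    have unique: "i' = i (Suc t) \<and> j' = j (Suc t)"
      if "cycle3 (Q (Suc (Suc t))) (m (Suc t)) i' j'" "i' \<in> S" "j' \<in> S" for i' j'
      using cycle3_unique[OF skew_Q cyc[of "Suc t"] that(1)] that(2,3) unfolding S[of "Suc t"] by blast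
    have "m (Suc t) \<in> {i t, j t}" using S[of t] m_in_S reduced[of t] by blast
    moreover have "i (Suc t) = m t \<and> j (Suc t) = j t" if "m (Suc t) = i t"
    proof -
      have "cycle3 (Q (Suc t)) (i t) (j t) (m t)" using cyc[of t] cycle3_rotate by metis
      moreover have "S = {i t, j t, m t}" using S[of t] by auto
      ultimately have "cycle3 (Q (Suc (Suc t))) (m (Suc t)) (m t) (j t)"
        using cycle3_Suc[OF cyclic _ _ that] that by simp
      from unique[OF this] show ?thesis using S[of t] by auto
    qed
    moreover have "i (Suc t) = i t \<and> j (Suc t) = m t" if "m (Suc t) = j t"
    proof -
      have "cycle3 (Q (Suc t)) (j t) (m t) (i t)" using cyc[of t] cycle3_rotate by metis
      moreover have "S = {j t, m t, i t}" using S[of t] by auto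
      ultimately have "cycle3 (Q (Suc (Suc t))) (m (Suc t)) (i t) (m t)"
        using cycle3_Suc[OF cyclic _ _ that] that by simp
      from unique[OF this] show ?thesis using S[of t] by auto
    qed
    ultimately show ?thesis by blast
  qed
  with S cyc that show ?thesis by blast
qed

end

text \<open>k is the vertex mutated last and k' the one mutated before it.\<close>

definition cycle_sign_pattern :: "('v \<Rightarrow> 'v \<Rightarrow> int) \<Rightarrow> 'v \<Rightarrow> 'v \<Rightarrow> 'v \<Rightarrow> bool" where
  "cycle_sign_pattern B k k' v \<longleftrightarrow> B v k > 0 \<or> (v = k \<and> B k k' > 0)"

lemma row_sign_pattern_cycle3:
  assumes skew: "skew_symmetric B" and cyc: "cycle3 B k i j"
    and signs: "B i f > 0" "B f j > 0" "B f k \<noteq> 0" "B f k > 0 \<longleftrightarrow> B k k' > 0"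
  shows "row_sign_pattern {k, i, j} B f (cycle_sign_pattern B k k')"
proof -
  have "B k i > 0" "B j k > 0" "B k k = 0"
    using cyc skew_symmetric_diag[OF skew] unfolding cycle3_def by auto
  moreover have "B f i < 0" "B i k < 0"
    using signs(1) \<open>B k i > 0\<close> skew_symmetricD[OF skew, of f i] skew_symmetricD[OF skew, of i k]
    by linarith+
  ultimately show ?thesis
    using signs cycle3_distinct[OF skew cyc] unfolding row_sign_pattern_def cycle_sign_pattern_def
    by auto
qed

context rank3_frozen
begin

lemma cyclic_run_dynamics:
  assumes S: "\<And>t. S = {m t, i t, j t}" and cyc: "\<And>t. cycle3 (Q (Suc t)) (m t) (i t) (j t)"
    and next_cycle: "\<And>t. m (Suc t) = i t \<and> i (Suc t) = m t \<and> j (Suc t) = j t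
      \<or> m (Suc t) = j t \<and> i (Suc t) = i t \<and> j (Suc t) = m t"
    and switching: "frequently (\<lambda>n. m (Suc (Suc n)) \<noteq> m n) sequentially"
  shows "cycle_dynamics (\<lambda>t. Q (Suc t) (i t) f) (\<lambda>t. Q (Suc t) f (j t)) (\<lambda>t. Q (Suc t) f (m t))
    (\<lambda>t. Q (Suc t) (m t) (i t)) (\<lambda>t. Q (Suc t) (i t) (j t)) (\<lambda>t. Q (Suc t) (j t) (m t))
    (\<lambda>t. m (Suc t) = i t)"
proof
  fix t
  have f: "f \<noteq> m t" "f \<noteq> i t" "f \<noteq> j t" using S[of t] f_notin_S by auto
  have in_S: "m t \<in> S" "i t \<in> S" "j t \<in> S" using S[of t] by auto
  show "Q (Suc t) (m t) (i t) \<ge> 2" "Q (Suc t) (i t) (j t) \<ge> 2" "Q (Suc t) (j t) (m t) \<ge> 2"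
    using cyc[of t] in_S unfolding cycle3_def by (auto intro!: Q_pos_ge_2 simp del: Qseq.simps)
  show "m (Suc t) = i t \<Longrightarrow>
      Q (Suc (Suc t)) (i (Suc t)) f = Q (Suc t) (m t) (i t) * max (Q (Suc t) (i t) f) 0 - Q (Suc t) f (m t)
    \<and> Q (Suc (Suc t)) f (j (Suc t)) = Q (Suc t) f (j t) + Q (Suc t) (i t) (j t) * max (- Q (Suc t) (i t) f) 0
    \<and> Q (Suc (Suc t)) f (m (Suc t)) = Q (Suc t) (i t) f
    \<and> Q (Suc (Suc t)) (m (Suc t)) (i (Suc t)) = Q (Suc t) (m t) (i t)
    \<and> Q (Suc (Suc t)) (j (Suc t)) (m (Suc t)) = Q (Suc t) (i t) (j t)"
    using mutate_cycle3_out[OF skew_Q cyc f] next_cycle[of t] cycle3_distinct[OF skew_Q cyc[of t]]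
    by auto
  show "m (Suc t) \<noteq> i t \<Longrightarrow>
      Q (Suc (Suc t)) (i (Suc t)) f = Q (Suc t) (i t) f + Q (Suc t) (i t) (j t) * max (- Q (Suc t) f (j t)) 0
    \<and> Q (Suc (Suc t)) f (j (Suc t)) = Q (Suc t) (j t) (m t) * max (Q (Suc t) f (j t)) 0 + Q (Suc t) f (m t)
    \<and> Q (Suc (Suc t)) f (m (Suc t)) = - Q (Suc t) f (j t)
    \<and> Q (Suc (Suc t)) (m (Suc t)) (i (Suc t)) = Q (Suc t) (i t) (j t)
    \<and> Q (Suc (Suc t)) (j (Suc t)) (m (Suc t)) = Q (Suc t) (j t) (m t)"
    using mutate_cycle3_in[OF skew_Q cyc f] next_cycle[of t] by auto
  show "\<not> (Q (Suc t) (i t) f = 0 \<and> Q (Suc t) f (j t) = 0 \<and> Q (Suc t) f (m t) = 0)"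
    using row_nonzero[of "Suc t"] S[of t] Q_antisym[of "Suc t" "i t" f] by auto
next
  have "(m (Suc t) = i t) \<noteq> (m (Suc (Suc t)) = i (Suc t))" if "m (Suc (Suc t)) \<noteq> m t" for t
    using next_cycle[of t] next_cycle[of "Suc t"] that reduced[of "Suc t"] by auto
  with switching show "frequently (\<lambda>t. (m (Suc t) = i t) \<noteq> (m (Suc (Suc t)) = i (Suc t))) sequentially"
    by (rule frequently_elim1)
qed

lemma last_vertex_sign:
  assumes S: "\<And>t. S = {m t, i t, j t}" and cyc: "\<And>t. cycle3 (Q (Suc t)) (m t) (i t) (j t)"
    and next_cycle: "\<And>t. m (Suc t) = i t \<and> i (Suc t) = m t \<and> j (Suc t) = j t
      \<or> m (Suc t) = j t \<and> i (Suc t) = i t \<and> j (Suc t) = m t"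
    and pos: "Q (Suc t) (i t) f \<ge> 1" "Q (Suc t) f (j t) \<ge> 1"
  shows "(Q (Suc (Suc t)) f (m (Suc t)) > 0 \<longleftrightarrow> Q (Suc (Suc t)) (m (Suc t)) (m t) > 0)
    \<and> Q (Suc (Suc t)) f (m (Suc t)) \<noteq> 0"
proof -
  have f: "f \<noteq> m t" "f \<noteq> i t" "f \<noteq> j t" using S[of t] f_notin_S by auto
  have c: "Q (Suc t) (m t) (i t) > 0" "Q (Suc t) (j t) (m t) > 0"
    using cyc[of t] unfolding cycle3_def by auto
  consider "m (Suc t) = i t" | "m (Suc t) = j t"
    using next_cycle[of t] by blast
  then show ?thesis
  proof cases
    case 1
    then show ?thesis using mutate_cycle3_out[OF skew_Q cyc f] pos(1) c(1) by simp
  next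
    case 2
    then show ?thesis using mutate_cycle3_in[OF skew_Q cyc f] pos(2) c(2) by (simp add: mutate_row)
  qed
qed

lemma cyclic_run_sign_pattern:
  assumes cyclic: "\<And>n. has_cycle3 S (Q n)"
    and switching: "frequently (\<lambda>n. m (Suc (Suc n)) \<noteq> m n) sequentially"
  shows "\<forall>\<^sub>F n in sequentially. row_sign_pattern S (Q (Suc (Suc n))) f
    (cycle_sign_pattern (Q (Suc (Suc n))) (m (Suc n)) (m n))"
proof -
  obtain i j where S: "\<And>t. S = {m t, i t, j t}" and cyc: "\<And>t. cycle3 (Q (Suc t)) (m t) (i t) (j t)"
    and next_cycle: "\<And>t. m (Suc t) = i t \<and> i (Suc t) = m t \<and> j (Suc t) = j t
      \<or> m (Suc t) = j t \<and> i (Suc t) = i t \<and> j (Suc t) = m t"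
    using cyclic_run_cycles[OF cyclic] by blast
  interpret dyn: cycle_dynamics "\<lambda>t. Q (Suc t) (i t) f" "\<lambda>t. Q (Suc t) f (j t)" "\<lambda>t. Q (Suc t) f (m t)"
    "\<lambda>t. Q (Suc t) (m t) (i t)" "\<lambda>t. Q (Suc t) (i t) (j t)" "\<lambda>t. Q (Suc t) (j t) (m t)"
    "\<lambda>t. m (Suc t) = i t"
    by (rule cyclic_run_dynamics[OF S cyc next_cycle switching])
  have "row_sign_pattern S (Q (Suc (Suc t))) f (cycle_sign_pattern (Q (Suc (Suc t))) (m (Suc t)) (m t))"
    if "dyn.absorbed t" "dyn.absorbed (Suc t)" for t
  proof -
    let ?Q = "Q (Suc (Suc t))" and ?k = "m (Suc t)"
    have xy: "Q (Suc t) (i t) f \<ge> 1" "Q (Suc t) f (j t) \<ge> 1" "?Q (i (Suc t)) f \<ge> 1" "?Q f (j (Suc t)) \<ge> 1"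
      using that unfolding dyn.absorbed_def absorbing_def by auto
    have "(?Q f ?k > 0 \<longleftrightarrow> ?Q ?k (m t) > 0) \<and> ?Q f ?k \<noteq> 0"
      by (rule last_vertex_sign[OF S cyc next_cycle xy(1,2)])
    then show ?thesis
      using row_sign_pattern_cycle3[OF skew_Q cyc[of "Suc t"]] xy(3,4) S[of "Suc t"] by simp
  qed
  moreover have "\<forall>\<^sub>F t in sequentially. dyn.absorbed t \<and> dyn.absorbed (Suc t)"
    using dyn.eventually_absorbed eventually_sequentially_Suc[THEN iffD2, OF dyn.eventually_absorbed]
    by (rule eventually_conj)
  ultimately show ?thesis by (auto elim: eventually_mono)
qed

end

context rank3_run
begin

lemma frequently_not_period_2:
  assumes balanced: "\<And>k. k \<in> S \<Longrightarrow> infinite {n. m n = k}"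
  shows "frequently (\<lambda>n. m (Suc (Suc n)) \<noteq> m n) sequentially"
  unfolding frequently_def eventually_sequentially
proof
  assume "\<exists>N. \<forall>n\<ge>N. \<not> m (Suc (Suc n)) \<noteq> m n"
  then obtain N where period: "\<And>n. n \<ge> N \<Longrightarrow> m (Suc (Suc n)) = m n" by auto
  obtain c where c: "S = {m N, m (Suc N), c}" "c \<noteq> m N" "c \<noteq> m (Suc N)"
    using card3_third[OF card_S m_in_S m_in_S reduced[of N, symmetric]] by blast
  have two_values: "m (N + d) \<in> {m N, m (Suc N)}" for d
  proof (induction d rule: nat_induct2)
    case (step d)
    then show ?case using period[of "N + d"] by simp
  qed simp_all
  have "n < N" if "m n = c" for n
  proof (rule ccontr)
    assume "\<not> n < N"
    then have "m n \<in> {m N, m (Suc N)}" using two_values[of "n - N"] by simp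
    with that c(2,3) show False by blast
  qed
  then have "{n. m n = c} \<subseteq> {..<N}" by blast
  then show False using balanced[of c] c(1) finite_subset by blast
qed

lemma has_cycle3_persists:
  assumes preserving: "\<And>n. cycle_preserving S {} (restrict_q S (Q n)) (m n)"
    and "has_cycle3 S (Q c)" "c \<le> n"
  shows "has_cycle3 S (Q n)"
  using assms(3)
proof (induction rule: dec_induct)
  case base
  then show ?case using assms(2) .
next
  case (step n)
  have "mutate (m n) (Q n) i j \<noteq> 0" if "i \<in> S" "j \<in> S" "i \<noteq> j" for i j
    using Q_nonzero[OF that, of "Suc n"] by simp
  with has_cycle3_mutate_if_cycle_preserving[OF skew_Q card_S m_in_S Q_nonzero _ preserving step.IH]
  show ?case by simp
qed

lemma rank3_run_shift: "rank3_run S (Q c) (\<lambda>n. m (n + c))"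
  using skew_Q card_S m_in_S reduced abundant by unfold_locales (simp_all add: Qseq_add[symmetric])

lemma rank3_run_uminus: "rank3_run S (\<lambda>i j. - B i j) m"
  using skew_symmetric_uminus[OF skew] card_S m_in_S reduced abundant
  by unfold_locales (simp_all add: Qseq_uminus[OF skew])

end

context rank3_frozen
begin

lemma rank3_frozen_shift: "rank3_frozen S (Q c) (\<lambda>n. m (n + c)) f"
  using rank3_run_shift f_notin_S row_nonzero by (simp add: rank3_frozen_def rank3_frozen_axioms_def)

lemma rank3_frozen_uminus: "rank3_frozen S (\<lambda>i j. - B i j) m f"
  using rank3_run_uminus f_notin_S f_adjacent by (simp add: rank3_frozen_def rank3_frozen_axioms_def)

lemma sink_run_sign_pattern:
  assumes sink: "\<And>n. is_sink S (Q n) (m n)"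
  shows "\<forall>\<^sub>F n in sequentially. row_sign_pattern S (Q n) f (\<lambda>v. v = m (n + 2))"
proof -
  interpret neg: rank3_frozen S "\<lambda>i j. - B i j" m f by (rule rank3_frozen_uminus)
  have "is_source S (neg.Q n) (m n)" for n
    using sink[of n] unfolding is_source_def is_sink_def Qseq_uminus[OF skew] Q_antisym[of n "m n"]
    by simp
  then have "\<forall>\<^sub>F n in sequentially. row_sign_pattern S (neg.Q n) f (\<lambda>v. v \<noteq> m (n + 2))"
    by (rule neg.source_run_sign_pattern)
  then show ?thesis
    unfolding row_sign_pattern_def Qseq_uminus[OF skew] by (auto elim!: eventually_mono)
qed

lemma eventual_cycle_sign_pattern:
  assumes preserving: "\<And>n. cycle_preserving S {} (restrict_q S (Q n)) (m n)"
    and balanced: "\<And>k. k \<in> S \<Longrightarrow> infinite {n. m n = k}"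
    and "has_cycle3 S (Q c)"
  shows "\<forall>\<^sub>F n in sequentially. row_sign_pattern S (Q n) f
    (cycle_sign_pattern (Q n) (m (n - 1)) (m (n - 2)))"
proof -
  interpret shifted: rank3_frozen S "Q c" "\<lambda>n. m (n + c)" f by (rule rank3_frozen_shift)
  have "has_cycle3 S (shifted.Q n)" for n
    using has_cycle3_persists[OF preserving assms(3), of "n + c"] by (simp add: Qseq_add)
  moreover have "frequently (\<lambda>n. m (Suc (Suc n) + c) \<noteq> m (n + c)) sequentially"
    using frequently_not_period_2[OF balanced]
      eventually_sequentially_seg[where P = "\<lambda>n. m (Suc (Suc n)) = m n" and k = c]
    unfolding frequently_def by simp
  ultimately have "\<forall>\<^sub>F n in sequentially. row_sign_pattern S (shifted.Q (Suc (Suc n))) f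
      (cycle_sign_pattern (shifted.Q (Suc (Suc n))) (m (Suc n + c)) (m (n + c)))"
    by (rule shifted.cyclic_run_sign_pattern)
  then have "\<forall>\<^sub>F n in sequentially. row_sign_pattern S (Q (n + c + 2)) f
      (cycle_sign_pattern (Q (n + c + 2)) (m (n + c + 2 - 1)) (m (n + c + 2 - 2)))"
    by (simp add: Qseq_add[symmetric] add.commute add.left_commute)
  then show ?thesis
    using eventually_sequentially_seg[where P = "\<lambda>n. row_sign_pattern S (Q n) f
      (cycle_sign_pattern (Q n) (m (n - 1)) (m (n - 2)))" and k = "c + 2"] by simp
qed

end

section \<open>Sign-coherence\<close>

lemma sign_coherent_if_row_sign_pattern:
  assumes frozen: "V - Mu \<noteq> {}" and skew: "skew_symmetric B"
    and pattern: "\<forall>f\<in>V - Mu. row_sign_pattern Mu B f P"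
  shows "sign_coherent V Mu B"
  unfolding sign_coherent_def
proof
  fix v assume "v \<in> Mu"
  then have signs: "\<forall>f\<in>V - Mu. (P v \<longrightarrow> B f v > 0) \<and> (\<not> P v \<longrightarrow> B v f > 0)"
    using pattern skew_symmetricD[OF skew, of v] unfolding row_sign_pattern_def by fastforce
  then have "\<exists>f\<in>V - Mu. adjacent B v f"
    using frozen skew_symmetricD[OF skew, of v] unfolding adjacent_def by fastforce
  with signs show "red V Mu B v \<or> green V Mu B v"
    unfolding red_def green_def by (cases "P v") (auto intro: less_imp_le)
qed

lemma (in rank3_run) eventually_common_sign_pattern:
  assumes frozen: "\<And>f. f \<in> F \<Longrightarrow> rank3_frozen S B m f"
    and preserving: "\<And>n. cycle_preserving S {} (restrict_q S (Q n)) (m n)"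
    and balanced: "\<And>k. k \<in> S \<Longrightarrow> infinite {n. m n = k}"
  shows "\<exists>P. \<forall>f\<in>F. \<forall>\<^sub>F n in sequentially. row_sign_pattern S (Q n) f (P n)"
proof (cases "\<exists>c. has_cycle3 S (Q c)")
  case True
  then obtain c where "has_cycle3 S (Q c)" by blast
  then have "\<forall>\<^sub>F n in sequentially.
      row_sign_pattern S (Q n) f (cycle_sign_pattern (Q n) (m (n - 1)) (m (n - 2)))" if "f \<in> F" for f
    using rank3_frozen.eventual_cycle_sign_pattern[OF frozen[OF that] preserving balanced] by blast
  then show ?thesis by (intro exI[of _ "\<lambda>n. cycle_sign_pattern (Q n) (m (n - 1)) (m (n - 2))"]) blast
next
  case False
  then consider "\<And>n. is_source S (Q n) (m n)" | "\<And>n. is_sink S (Q n) (m n)"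
    using always_source_or_always_sink by blast
  then show ?thesis
  proof cases
    case 1
    then show ?thesis using rank3_frozen.source_run_sign_pattern[OF frozen]
      by (intro exI[of _ "\<lambda>n v. v \<noteq> m (n + 2)"]) blast
  next
    case 2
    then show ?thesis using rank3_frozen.sink_run_sign_pattern[OF frozen]
      by (intro exI[of _ "\<lambda>n v. v = m (n + 2)"]) blast
  qed
qed

theorem mainTheorem15:
  fixes V Mu :: "'v set" and B :: "'v \<Rightarrow> 'v \<Rightarrow> int" and m :: "nat \<Rightarrow> 'v"
  assumes "is_quiver V Mu B"
    and "connected_quiver V Mu B"
    and "card Mu = 3"
    and "V - Mu \<noteq> {}"
    and "mutation_abundant Mu (restrict_q Mu B)"
    and "\<forall>n. m n \<in> Mu"
    and "reduced_seq m"
    and "weakly_balanced Mu m"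
    and "cycle_preserving_seq Mu B m"
  shows "\<exists>T. \<forall>j>T. sign_coherent V Mu (Qseq B m j)"
proof -
  have skew: "skew_symmetric B" using assms(1) unfolding is_quiver_def skew_symmetric_def by blast
  have reduced: "m (Suc n) \<noteq> m n" for n using assms(7) unfolding reduced_seq_def by metis
  interpret rank3_run Mu B m
    using skew assms(3,6) reduced mutation_abundant_Qseq[OF assms(5,6)] by unfold_locales auto
  have "rank3_frozen Mu B m f" if "f \<in> V - Mu" for f
    using that assms(2) unfolding connected_quiver_def adjacent_def
    by unfold_locales auto
  then obtain P where "\<forall>f\<in>V - Mu. \<forall>\<^sub>F n in sequentially. row_sign_pattern Mu (Q n) f (P n)"
    using eventually_common_sign_pattern assms(8,9)
    unfolding weakly_balanced_def cycle_preserving_seq_def by blast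
  then have "\<forall>\<^sub>F n in sequentially. \<forall>f\<in>V - Mu. row_sign_pattern Mu (Q n) f (P n)"
    using assms(1) by (intro eventually_ball_finite) (auto simp: is_quiver_def)
  then have "\<forall>\<^sub>F n in sequentially. sign_coherent V Mu (Q n)"
    by (rule eventually_mono) (rule sign_coherent_if_row_sign_pattern[OF assms(4) skew_Q])
  then show ?thesis unfolding eventually_sequentially by (meson less_imp_le)
qed

end
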